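(* Let $\mathcal{X}$ be a finite set with $|\mathcal{X}|=r\geq 2$, let $P_X$ be a probability mass function on $\mathcal{X}$ with $P_X(x)>0$ for all $x\in\mathcal{X}$, let $\mathcal{Z}=\{0,1,\ldots,k-1\}$ with $2\leq k\leq r$, let $f:\mathcal{X}\to\mathcal{Z}$ be a given mapping, and fix an integer list size $l$ with $1\leq l<r$. Let $\pi^{(l)}(\rho)$ denote list $\rho$-privacy and $\Lambda_\rho$ the set defined in the context. Then: (i) For $0\leq\rho\leq 1/k$, $\pi^{(l)}(\rho)=1-P_X(L_l^* )$. (ii) For $\rho=1$, $\pi^{(l)}(1)=1-\sum_{i\in\mathcal{Z}} P_X\big([f^{-1}(i)]_{\min\{l,|f^{-1}(i)|\}}\big)$. (iii) For $0\leq\rho\leq 1$, $$\pi^{(l)}(\rho)\leq \pi_u^{(l)}(\rho):=1-\Big[P_X(\Lambda_\rho)+\rho\sum_{i\in\mathcal{Z}}P_X\big([f^{-1}(i)\setminus\Lambda_\rho]_{\min\{l-|\Lambda_\rho|,\,|f^{-1}(i)\setminus\Lambda_\rho|\}}\big)\Big].$$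
   Context: Notation: $f^{-1}(i)=\{x\in\mathcal{X}: f(x)=i\}$. For $A\subseteq\mathcal{X}$ and $0\leq t\leq|A|$, $[A]_t$ denotes a set of $t$ largest $P_X$-probability elements of $A$ (ties broken arbitrarily), with $[A]_0=\emptyset$; $L_t^*=[\mathcal{X}]_t$. For a set $S$, $P_X(S)=\sum_{x\in S}P_X(x)$. A $\rho$-recoverable query response ($\rho$-QR), for $0\leq\rho\leq 1$, is a stochastic matrix $W:\mathcal{X}\to\mathcal{Z}$ (i.e. $W(i|x)\geq 0$, $\sum_{i\in\mathcal{Z}}W(i|x)=1$) with $W(f(x)|x)\geq\rho$ for all $x\in\mathcal{X}$; equivalently a $\mathcal{Z}$-valued random variable $F(X)$ with $P(F(X)=i\mid X=x)=W(i|x)$, where $X\sim P_X$. Let $\mathcal{L}_l$ be the set of all $l$-element subsets of $\mathcal{X}$. The list privacy of a $\rho$-QR $W$ is $\pi^{(l)}_\rho(W)=\min_{g}P(X\notin g(F(X)))$, the minimum over all maps $g:\mathcal{Z}\to\mathcal{L}_l$; equivalently $\pi^{(l)}_\rho(W)=1-\sum_{i\in\mathcal{Z}}\max_{L\in\mathcal{L}_l}\sum_{x\in L}P_X(x)W(i|x)$. List $\rho$-privacy is $\pi^{(l)}(\rho)=\max\{\pi^{(l)}_\rho(W): W \text{ a } \rho\text{-QR}\}$. For $0\leq\rho\leq1$, $\Lambda_\rho$ denotes a maximizer (not necessarily unique) over subsets $\Lambda\subset\mathcal{X}$ with $0\leq|\Lambda|\leq l$ of $$P_X(\Lambda)+\rho\sum_{i\in\mathcal{Z}}P_X\big([f^{-1}(i)\setminus\Lambda]_{\min\{l-|\Lambda|,\,|f^{-1}(i)\setminus\Lambda|\}}\big).$$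 *)

theory Defs
  imports Complex_Main
begin

definition is_top_set :: "('a \<Rightarrow> real) \<Rightarrow> 'a set \<Rightarrow> nat \<Rightarrow> 'a set \<Rightarrow> bool" where
  "is_top_set P A t S \<longleftrightarrow> S \<subseteq> A \<and> card S = t \<and> (\<forall>x\<in>S. \<forall>y\<in>A - S. P y \<le> P x)"

text \<open>[A]_t, ties broken arbitrarily (via choice).\<close>
definition top_set :: "('a \<Rightarrow> real) \<Rightarrow> 'a set \<Rightarrow> nat \<Rightarrow> 'a set" where
  "top_set P A t = (SOME S. is_top_set P A t S)"

definition mass :: "('a \<Rightarrow> real) \<Rightarrow> 'a set \<Rightarrow> real" where
  "mass P S = (\<Sum>x\<in>S. P x)"

definition preimg :: "'a set \<Rightarrow> ('a \<Rightarrow> nat) \<Rightarrow> nat \<Rightarrow> 'a set" where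
  "preimg X f i = {x \<in> X. f x = i}"

text \<open>rho-recoverable query response: W x i = W(i|x), Z = {0..<k}.\<close>
definition is_QR :: "'a set \<Rightarrow> nat \<Rightarrow> ('a \<Rightarrow> nat) \<Rightarrow> real \<Rightarrow> ('a \<Rightarrow> nat \<Rightarrow> real) \<Rightarrow> bool" where
  "is_QR X k f \<rho> W \<longleftrightarrow>
     (\<forall>x\<in>X. (\<forall>i<k. 0 \<le> W x i) \<and> (\<Sum>i<k. W x i) = 1 \<and> \<rho> \<le> W x (f x))"

definition list_priv_W :: "'a set \<Rightarrow> ('a \<Rightarrow> real) \<Rightarrow> nat \<Rightarrow> nat \<Rightarrow> ('a \<Rightarrow> nat \<Rightarrow> real) \<Rightarrow> real" where
  "list_priv_W X P k l W =
     1 - (\<Sum>i<k. Max ((\<lambda>L. \<Sum>x\<in>L. P x * W x i) ` {L. L \<subseteq> X \<and> card L = l}))"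

text \<open>List rho-privacy: the maximum (= supremum, which is attained) over all rho-QRs.\<close>
definition list_priv :: "'a set \<Rightarrow> ('a \<Rightarrow> real) \<Rightarrow> nat \<Rightarrow> ('a \<Rightarrow> nat) \<Rightarrow> nat \<Rightarrow> real \<Rightarrow> real" where
  "list_priv X P k f l \<rho> = Sup {list_priv_W X P k l W | W. is_QR X k f \<rho> W}"

text \<open>Objective maximized by Lambda_rho.\<close>
definition lambda_obj :: "'a set \<Rightarrow> ('a \<Rightarrow> real) \<Rightarrow> nat \<Rightarrow> ('a \<Rightarrow> nat) \<Rightarrow> nat \<Rightarrow> real \<Rightarrow> 'a set \<Rightarrow> real" where
  "lambda_obj X P k f l \<rho> \<Lambda> =
     mass P \<Lambda> + \<rho> * (\<Sum>i<k. mass P (top_set P (preimg X f i - \<Lambda>)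
                         (min (l - card \<Lambda>) (card (preimg X f i - \<Lambda>)))))"

end

theory Submission
  imports Defs
begin

(* For every \<rho>-QR W and every \<Lambda> with |\<Lambda>| \<le> l, guessing the list \<Lambda> \<union> [f\<inverse>(i) - \<Lambda>] on the answer
   i succeeds with probability at least lambda_obj \<Lambda>: on \<Lambda> the answers i sum to P(\<Lambda>), and off \<Lambda>
   each x with f x = i contributes at least \<rho> P(x), because W(f x|x) \<ge> \<rho>.  This is (iii).  For
   \<rho> \<le> 1/k the uniform response is a \<rho>-QR and meets this bound for \<Lambda> = L*_l, giving (i); for
   \<rho> = 1 the deterministic response x \<mapsto> f x is the only 1-QR, and its best list for the answer i
   is [f\<inverse>(i)]_l, giving (ii). *)

lemma is_top_set_exists:
  assumes "finite A" "t \<le> card A"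
  shows "\<exists>S. is_top_set P A t S"
  using assms(2)
proof (induction t)
  case 0
  then show ?case by (auto simp: is_top_set_def intro!: exI[of _ "{}"])
next
  case (Suc t)
  then obtain S where S: "is_top_set P A t S" by auto
  hence SA: "S \<subseteq> A" "card S = t" by (auto simp: is_top_set_def)
  have fin: "finite (A - S)" and ne: "A - S \<noteq> {}"
    using Suc.prems SA assms(1) by (auto dest: card_mono)
  have "Max (P ` (A - S)) \<in> P ` (A - S)" using fin ne by (intro Max_in) auto
  then obtain y where y: "y \<in> A - S" "P y = Max (P ` (A - S))" by auto
  have "is_top_set P A (Suc t) (insert y S)"
    using S y fin SA finite_subset[OF SA(1) assms(1)] by (auto simp: is_top_set_def)
  then show ?case by blast
qed

lemma is_top_set_top_set:
  assumes "finite A" "t \<le> card A"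
  shows "is_top_set P A t (top_set P A t)"
  unfolding top_set_def using is_top_set_exists[OF assms] by (rule someI_ex)

lemma top_set_0: "finite A \<Longrightarrow> top_set P A 0 = {}"
  using is_top_set_top_set[of A 0 P] by (auto simp: is_top_set_def finite_subset)

lemma mass_le_top_set_same_card:
  assumes S: "is_top_set P A t S" and "finite A" and L: "L \<subseteq> A" "card L = t"
  shows "mass P L \<le> mass P S"
proof -
  have SA: "S \<subseteq> A" "card S = t" "\<forall>x\<in>S. \<forall>y\<in>A - S. P y \<le> P x"
    using S by (auto simp: is_top_set_def)
  have fS: "finite S" and fL: "finite L" using SA L \<open>finite A\<close> finite_subset by auto
  have card_eq: "card (L - S) = card (S - L)"
    using card_Int_Diff[OF fL, of S] card_Int_Diff[OF fS, of L] L SA by (simp add: Int_commute)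
  have "sum P (L - S) \<le> sum P (S - L)"
  proof (cases "S - L = {}")
    case True
    then have "L - S = {}" using card_eq fL by (metis card_0_eq finite_Diff card.empty)
    then show ?thesis using True by simp
  next
    case False
    define c where "c = Min (P ` (S - L))"
    have fSL: "finite (S - L)" using fS by auto
    \<comment> \<open>every element of L - S weighs at most every element of S - L\<close>
    have "sum P (L - S) \<le> (\<Sum>y\<in>L - S. c)"
    proof (rule sum_mono)
      fix y assume "y \<in> L - S"
      moreover have "c \<in> P ` (S - L)" unfolding c_def using fSL False by (intro Min_in) auto
      then obtain x where "x \<in> S - L" "c = P x" by auto
      ultimately show "P y \<le> c" using SA(3) L by auto
    qed
    also have "\<dots> = (\<Sum>x\<in>S - L. c)" using card_eq by simp
    also have "\<dots> \<le> sum P (S - L)"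
      using fSL by (intro sum_mono) (auto simp: c_def)
    finally show ?thesis .
  qed
  then show ?thesis
    using sum.Int_Diff[OF fL, of P S] sum.Int_Diff[OF fS, of P L]
    by (simp add: mass_def Int_commute)
qed

lemma mass_le_top_set:
  assumes S: "is_top_set P A t S" and "finite A" and nonneg: "\<forall>x\<in>A. 0 \<le> P x"
    and L: "L \<subseteq> A" "card L \<le> t"
  shows "mass P L \<le> mass P S"
proof -
  have "t \<le> card A" using S \<open>finite A\<close> by (metis is_top_set_def card_mono)
  then obtain L' where L': "L \<subseteq> L'" "L' \<subseteq> A" "card L' = t"
    using exists_subset_between[of L t A] L \<open>finite A\<close> by auto
  have "mass P L \<le> mass P L'"
    unfolding mass_def using L' nonneg \<open>finite A\<close> by (intro sum_mono2) (auto intro: finite_subset)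
  also have "\<dots> \<le> mass P S" using mass_le_top_set_same_card[OF S \<open>finite A\<close> L'(2,3)] .
  finally show ?thesis .
qed

definition max_list_mass :: "'a set \<Rightarrow> nat \<Rightarrow> ('a \<Rightarrow> real) \<Rightarrow> real" where
  "max_list_mass X l g = Max ((\<lambda>L. \<Sum>x\<in>L. g x) ` {L. L \<subseteq> X \<and> card L = l})"

lemma list_priv_W_eq_max_list_mass:
  "list_priv_W X P k l W = 1 - (\<Sum>i<k. max_list_mass X l (\<lambda>x. P x * W x i))"
  by (simp add: list_priv_W_def max_list_mass_def)

lemma finite_subsets_card_eq: "finite X \<Longrightarrow> finite {L. L \<subseteq> X \<and> card L = l}"
  by (rule finite_subset[of _ "Pow X"]) auto

lemma sum_le_max_list_mass:
  assumes "finite X" "l \<le> card X" "\<forall>x\<in>X. 0 \<le> g x" "L \<subseteq> X" "card L \<le> l"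
  shows "sum g L \<le> max_list_mass X l g"
proof -
  obtain L' where L': "L \<subseteq> L'" "L' \<subseteq> X" "card L' = l"
    using exists_subset_between[of L l X] assms by auto
  have "sum g L \<le> sum g L'"
    using L' assms by (intro sum_mono2) (auto intro: finite_subset)
  also have "\<dots> \<le> max_list_mass X l g"
    unfolding max_list_mass_def using L' assms(1)
    by (intro Max_ge finite_imageI finite_subsets_card_eq) auto
  finally show ?thesis .
qed

lemma max_list_mass_eqI:
  assumes "finite X" "L \<subseteq> X" "card L = l" "sum g L = c"
    and "\<And>L'. L' \<subseteq> X \<Longrightarrow> card L' = l \<Longrightarrow> sum g L' \<le> c"
  shows "max_list_mass X l g = c"
  unfolding max_list_mass_def
proof (rule Max_eqI)
  show "finite ((\<lambda>L. \<Sum>x\<in>L. g x) ` {L. L \<subseteq> X \<and> card L = l})"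
    using assms(1) by (intro finite_imageI finite_subsets_card_eq)
  show "c \<in> (\<lambda>L. \<Sum>x\<in>L. g x) ` {L. L \<subseteq> X \<and> card L = l}"
    using assms(2-4) by force
qed (use assms(5) in auto)

definition deterministic_response :: "('a \<Rightarrow> nat) \<Rightarrow> 'a \<Rightarrow> nat \<Rightarrow> real" where
  "deterministic_response f x i = (if i = f x then 1 else 0)"

lemma is_QR_deterministic_response:
  "\<forall>x\<in>X. f x < k \<Longrightarrow> \<rho> \<le> 1 \<Longrightarrow> is_QR X k f \<rho> (deterministic_response f)"
  by (auto simp: is_QR_def deterministic_response_def sum.delta)

lemma is_QR_1_eq_deterministic_response:
  assumes W: "is_QR X k f 1 W" and "\<forall>x\<in>X. f x < k" and "x \<in> X" "i < k"
  shows "W x i = deterministic_response f x i"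
proof -
  have nonneg: "\<forall>j\<in>{..<k} - {f x}. 0 \<le> W x j" and total: "(\<Sum>j<k. W x j) = 1"
    and hit: "1 \<le> W x (f x)" using W \<open>x \<in> X\<close> by (auto simp: is_QR_def)
  have split: "(\<Sum>j<k. W x j) = W x (f x) + (\<Sum>j\<in>{..<k} - {f x}. W x j)"
    using sum.remove[of "{..<k}" "f x"] assms(2,3) by simp
  have "0 \<le> (\<Sum>j\<in>{..<k} - {f x}. W x j)" using nonneg by (intro sum_nonneg) auto
  then have rest_0: "(\<Sum>j\<in>{..<k} - {f x}. W x j) = 0" using split total hit by linarith
  then have "\<forall>j\<in>{..<k} - {f x}. W x j = 0"
    using sum_nonneg_eq_0_iff nonneg by blast
  moreover have "W x (f x) = 1" using split total rest_0 by linarith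
  ultimately show ?thesis using \<open>i < k\<close> by (auto simp: deterministic_response_def)
qed

lemma list_priv_W_cong:
  "(\<And>x i. x \<in> X \<Longrightarrow> i < k \<Longrightarrow> W x i = W' x i) \<Longrightarrow> list_priv_W X P k l W = list_priv_W X P k l W'"
  unfolding list_priv_W_def
  by (intro arg_cong[where f = "\<lambda>s. 1 - s"] sum.cong refl arg_cong[where f = Max] image_cong)
     (auto intro!: sum.cong)

lemma list_priv_le:
  assumes "is_QR X k f \<rho> W\<^sub>0" and "\<And>W. is_QR X k f \<rho> W \<Longrightarrow> list_priv_W X P k l W \<le> c"
  shows "list_priv X P k f l \<rho> \<le> c"
  unfolding list_priv_def by (rule cSup_least) (use assms in auto)

lemma list_priv_eqI:
  assumes "is_QR X k f \<rho> W\<^sub>0" "list_priv_W X P k l W\<^sub>0 = c"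
    and "\<And>W. is_QR X k f \<rho> W \<Longrightarrow> list_priv_W X P k l W \<le> c"
  shows "list_priv X P k f l \<rho> = c"
  unfolding list_priv_def by (rule cSup_eq_maximum) (use assms in auto)

lemma max_list_mass_ge_QR:
  assumes "finite X" and nonneg: "\<forall>x\<in>X. 0 \<le> P x" and W: "is_QR X k f \<rho> W" and "0 \<le> \<rho>"
    and "i < k" "l \<le> card X" and \<Lambda>: "\<Lambda> \<subseteq> X" and T: "T \<subseteq> preimg X f i - \<Lambda>"
    and card: "card \<Lambda> + card T \<le> l"
  shows "(\<Sum>x\<in>\<Lambda>. P x * W x i) + \<rho> * mass P T \<le> max_list_mass X l (\<lambda>x. P x * W x i)"
proof -
  have TX: "T \<subseteq> X" and fT: "finite T" and f_T: "\<forall>x\<in>T. f x = i"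
    using T \<open>finite X\<close> by (auto simp: preimg_def intro: finite_subset)
  have fin\<Lambda>: "finite \<Lambda>" using \<Lambda> \<open>finite X\<close> finite_subset by auto
  have disj: "\<Lambda> \<inter> T = {}" using T by auto
  have "\<rho> * mass P T = (\<Sum>x\<in>T. \<rho> * P x)" by (simp add: mass_def sum_distrib_left)
  also have "\<dots> \<le> (\<Sum>x\<in>T. P x * W x i)"
  proof (rule sum_mono)
    fix x assume "x \<in> T"
    then have "0 \<le> P x" "\<rho> \<le> W x i" using W TX f_T nonneg by (auto simp: is_QR_def)
    then show "\<rho> * P x \<le> P x * W x i" by (metis mult.commute mult_left_mono)
  qed
  finally have "(\<Sum>x\<in>\<Lambda>. P x * W x i) + \<rho> * mass P T \<le> (\<Sum>x\<in>\<Lambda> \<union> T. P x * W x i)"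
    by (simp add: sum.union_disjoint[OF fin\<Lambda> fT disj])
  also have "\<dots> \<le> max_list_mass X l (\<lambda>x. P x * W x i)"
  proof (rule sum_le_max_list_mass)
    show "\<forall>x\<in>X. 0 \<le> P x * W x i" using W nonneg \<open>i < k\<close> by (simp add: is_QR_def)
    show "card (\<Lambda> \<union> T) \<le> l" using card_Un_le[of \<Lambda> T] card by linarith
  qed (use assms TX in auto)
  finally show ?thesis .
qed

lemma lambda_obj_le_max_list_mass:
  assumes "finite X" and nonneg: "\<forall>x\<in>X. 0 \<le> P x" and W: "is_QR X k f \<rho> W" and "0 \<le> \<rho>"
    and "l \<le> card X" and \<Lambda>: "\<Lambda> \<subseteq> X" "card \<Lambda> \<le> l"
  shows "lambda_obj X P k f l \<rho> \<Lambda> \<le> (\<Sum>i<k. max_list_mass X l (\<lambda>x. P x * W x i))"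
proof -
  define T where "T i = top_set P (preimg X f i - \<Lambda>) (min (l - card \<Lambda>) (card (preimg X f i - \<Lambda>)))"
    for i
  have T: "T i \<subseteq> preimg X f i - \<Lambda>" "card \<Lambda> + card (T i) \<le> l" for i
    using is_top_set_top_set[of "preimg X f i - \<Lambda>"] \<open>finite X\<close> \<Lambda>(2)
    by (auto simp: T_def is_top_set_def preimg_def)
  have "mass P \<Lambda> = (\<Sum>x\<in>\<Lambda>. P x * (\<Sum>i<k. W x i))"
    using W \<Lambda>(1) by (auto simp: mass_def is_QR_def intro!: sum.cong)
  also have "\<dots> = (\<Sum>i<k. \<Sum>x\<in>\<Lambda>. P x * W x i)"
    by (simp add: sum_distrib_left sum.swap[of _ "{..<k}"])
  finally have "lambda_obj X P k f l \<rho> \<Lambda> = (\<Sum>i<k. (\<Sum>x\<in>\<Lambda>. P x * W x i) + \<rho> * mass P (T i))"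
    by (simp add: lambda_obj_def T_def sum.distrib sum_distrib_left)
  also have "\<dots> \<le> (\<Sum>i<k. max_list_mass X l (\<lambda>x. P x * W x i))"
    using max_list_mass_ge_QR[OF assms(1-4) _ assms(5,6) T] by (intro sum_mono) auto
  finally show ?thesis .
qed

lemma list_priv_W_le_lambda_obj:
  assumes "finite X" "\<forall>x\<in>X. 0 \<le> P x" "is_QR X k f \<rho> W" "0 \<le> \<rho>"
    and "l \<le> card X" "\<Lambda> \<subseteq> X" "card \<Lambda> \<le> l"
  shows "list_priv_W X P k l W \<le> 1 - lambda_obj X P k f l \<rho> \<Lambda>"
  using lambda_obj_le_max_list_mass[OF assms] by (simp add: list_priv_W_eq_max_list_mass)

lemma lambda_obj_top_set:
  assumes "finite X" "l \<le> card X"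
  shows "lambda_obj X P k f l \<rho> (top_set P X l) = mass P (top_set P X l)"
  using is_top_set_top_set[OF assms, of P] assms(1)
  by (simp add: lambda_obj_def is_top_set_def top_set_0 preimg_def mass_def)

lemma list_priv_W_uniform:
  assumes "finite X" "l \<le> card X" "0 < k"
  shows "list_priv_W X P k l (\<lambda>_ _. 1 / real k) = 1 - mass P (top_set P X l)"
proof -
  let ?S = "top_set P X l"
  have S: "is_top_set P X l ?S" using is_top_set_top_set[OF assms(1,2)] .
  have "max_list_mass X l (\<lambda>x. P x * (1 / real k)) = mass P ?S / real k"
  proof (rule max_list_mass_eqI[OF assms(1)])
    show "?S \<subseteq> X" "card ?S = l" using S by (auto simp: is_top_set_def)
    show "(\<Sum>x\<in>?S. P x * (1 / real k)) = mass P ?S / real k"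
      by (simp add: mass_def sum_divide_distrib)
    show "(\<Sum>x\<in>L. P x * (1 / real k)) \<le> mass P ?S / real k" if "L \<subseteq> X" "card L = l" for L
      using mass_le_top_set_same_card[OF S assms(1) that]
      by (simp add: mass_def sum_divide_distrib[symmetric] divide_right_mono)
  qed
  then show ?thesis using assms(3) by (simp add: list_priv_W_eq_max_list_mass)
qed

lemma list_priv_W_deterministic_response:
  assumes "finite X" and nonneg: "\<forall>x\<in>X. 0 \<le> P x" and "l \<le> card X"
  shows "list_priv_W X P k l (deterministic_response f) =
           1 - (\<Sum>i<k. mass P (top_set P (preimg X f i) (min l (card (preimg X f i)))))"
proof -
  have "max_list_mass X l (\<lambda>x. P x * deterministic_response f x i) = mass P (top_set P A t)"
    if A: "A = preimg X f i" and t: "t = min l (card A)" for i A t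
  proof -
    have fA: "finite A" using \<open>finite X\<close> A by (simp add: preimg_def)
    have S: "is_top_set P A t (top_set P A t)" using is_top_set_top_set[OF fA] t by simp
    have SX: "top_set P A t \<subseteq> X" using S A by (auto simp: is_top_set_def preimg_def)
    have sum_eq: "(\<Sum>x\<in>L. P x * deterministic_response f x i) = mass P (A \<inter> L)"
      if "L \<subseteq> X" for L
    proof -
      have "finite L" using that \<open>finite X\<close> finite_subset by auto
      have "(\<Sum>x\<in>L. P x * deterministic_response f x i) = (\<Sum>x\<in>L. if f x = i then P x else 0)"
        by (intro sum.cong) (auto simp: deterministic_response_def)
      also have "\<dots> = mass P {x \<in> L. f x = i}"
        by (simp add: mass_def sum.inter_filter[OF \<open>finite L\<close>])
      also have "{x \<in> L. f x = i} = A \<inter> L" using that A by (auto simp: preimg_def)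
      finally show ?thesis .
    qed
    have nonneg_A: "\<forall>x\<in>A. 0 \<le> P x" using nonneg A by (simp add: preimg_def)
    have le_top: "mass P (A \<inter> L) \<le> mass P (top_set P A t)" if L: "L \<subseteq> X" "card L = l" for L
    proof (rule mass_le_top_set[OF S fA nonneg_A])
      have "finite L" using L \<open>finite X\<close> finite_subset by auto
      then show "card (A \<inter> L) \<le> t"
        using t L card_mono[OF fA, of "A \<inter> L"] card_mono[of L "A \<inter> L"] by auto
    qed auto
    obtain L where L: "top_set P A t \<subseteq> L" "L \<subseteq> X" "card L = l"
      using exists_subset_between[of "top_set P A t" l X] S t SX \<open>finite X\<close> \<open>l \<le> card X\<close>
      by (auto simp: is_top_set_def)
    have "top_set P A t \<subseteq> A \<inter> L" using S L by (auto simp: is_top_set_def)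
    then have "mass P (top_set P A t) \<le> mass P (A \<inter> L)"
      unfolding mass_def using fA nonneg_A by (intro sum_mono2) auto
    then have "(\<Sum>x\<in>L. P x * deterministic_response f x i) = mass P (top_set P A t)"
      using sum_eq[OF L(2)] le_top[OF L(2,3)] by simp
    then show ?thesis
      using le_top sum_eq by (intro max_list_mass_eqI[OF \<open>finite X\<close> L(2,3)]) auto
  qed
  then show ?thesis by (simp add: list_priv_W_eq_max_list_mass)
qed

lemma list_priv_le_lambda_obj:
  assumes "finite X" "\<forall>x\<in>X. 0 \<le> P x" "\<forall>x\<in>X. f x < k" "0 \<le> \<rho>" "\<rho> \<le> 1"
    and "l \<le> card X" "\<Lambda> \<subseteq> X" "card \<Lambda> \<le> l"
  shows "list_priv X P k f l \<rho> \<le> 1 - lambda_obj X P k f l \<rho> \<Lambda>"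
  using is_QR_deterministic_response[OF assms(3,5)] list_priv_W_le_lambda_obj[OF assms(1,2) _ assms(4,6-8)]
  by (rule list_priv_le)

lemma list_priv_small_rho:
  assumes "finite X" "\<forall>x\<in>X. 0 \<le> P x" "0 < k" "0 \<le> \<rho>" "\<rho> \<le> 1 / real k" "l \<le> card X"
  shows "list_priv X P k f l \<rho> = 1 - mass P (top_set P X l)"
proof (rule list_priv_eqI)
  show "is_QR X k f \<rho> (\<lambda>_ _. 1 / real k)" using assms(3-5) by (simp add: is_QR_def)
  show "list_priv_W X P k l (\<lambda>_ _. 1 / real k) = 1 - mass P (top_set P X l)"
    using list_priv_W_uniform[OF assms(1,6,3)] .
  show "list_priv_W X P k l W \<le> 1 - mass P (top_set P X l)" if "is_QR X k f \<rho> W" for W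
    using list_priv_W_le_lambda_obj[OF assms(1,2) that assms(4,6), of "top_set P X l"]
      is_top_set_top_set[OF assms(1,6), of P] lambda_obj_top_set[OF assms(1,6)]
    by (simp add: is_top_set_def)
qed

lemma list_priv_1:
  assumes "finite X" "\<forall>x\<in>X. 0 \<le> P x" "\<forall>x\<in>X. f x < k" "l \<le> card X"
  shows "list_priv X P k f l 1 =
           1 - (\<Sum>i<k. mass P (top_set P (preimg X f i) (min l (card (preimg X f i)))))"
proof (rule list_priv_eqI)
  show "is_QR X k f 1 (deterministic_response f)"
    using is_QR_deterministic_response[OF assms(3) order_refl] .
  show "list_priv_W X P k l (deterministic_response f) =
          1 - (\<Sum>i<k. mass P (top_set P (preimg X f i) (min l (card (preimg X f i)))))"
    using list_priv_W_deterministic_response[OF assms(1,2,4)] .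
  show "list_priv_W X P k l W \<le>
          1 - (\<Sum>i<k. mass P (top_set P (preimg X f i) (min l (card (preimg X f i)))))"
    if "is_QR X k f 1 W" for W
    using list_priv_W_cong[of X k W "deterministic_response f"]
      is_QR_1_eq_deterministic_response[OF that assms(3)]
      list_priv_W_deterministic_response[OF assms(1,2,4)]
    by simp
qed

theorem theorem1:
  fixes X :: "'a set" and P :: "'a \<Rightarrow> real" and k l :: nat and f :: "'a \<Rightarrow> nat"
  assumes "finite X" and "card X \<ge> 2"
    and "\<forall>x\<in>X. P x > 0" and "(\<Sum>x\<in>X. P x) = 1"
    and "2 \<le> k" and "k \<le> card X"
    and "\<forall>x\<in>X. f x < k"
    and "1 \<le> l" and "l < card X"
  shows "(\<forall>\<rho>::real. 0 \<le> \<rho> \<and> \<rho> \<le> 1 / real k \<longrightarrow>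
            list_priv X P k f l \<rho> = 1 - mass P (top_set P X l))
       \<and> list_priv X P k f l 1 =
            1 - (\<Sum>i<k. mass P (top_set P (preimg X f i) (min l (card (preimg X f i)))))
       \<and> (\<forall>(\<rho>::real) \<Lambda>. 0 \<le> \<rho> \<and> \<rho> \<le> 1 \<and> \<Lambda> \<subseteq> X \<and> card \<Lambda> \<le> l
            \<and> (\<forall>\<Lambda>'. \<Lambda>' \<subseteq> X \<and> card \<Lambda>' \<le> l \<longrightarrow>
                   lambda_obj X P k f l \<rho> \<Lambda>' \<le> lambda_obj X P k f l \<rho> \<Lambda>)
            \<longrightarrow> list_priv X P k f l \<rho> \<le> 1 - lambda_obj X P k f l \<rho> \<Lambda>)"
proof -
  have nonneg: "\<forall>x\<in>X. 0 \<le> P x" using assms(3) by (simp add: less_imp_le)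
  have "l \<le> card X" "0 < k" using assms(5,9) by simp_all
  \<comment> \<open>the bound (iii) holds for every admissible \<Lambda>; maximality of \<Lambda> only makes it the sharpest\<close>
  then show ?thesis
    using list_priv_small_rho[OF assms(1) nonneg] list_priv_1[OF assms(1) nonneg assms(7)]
      list_priv_le_lambda_obj[OF assms(1) nonneg assms(7)]
    by auto
qed

end
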